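(* Let $\theta^*>0$, $\mathbf{P}=[-\theta^*,\theta^*]$, and let $g\colon\mathbf{P}\to\mathbb{R}$ be continuously differentiable with $g(\theta)\neq0$ and $g'(\theta)\neq0$ for all $\theta\in\mathbf{P}$ (so $g$ is zero-free and strictly monotone). Put $k^*:=\max_{\theta\in\mathbf{P}}\frac{2\theta}{g'(\theta)}$. Then for every real $k>k^*$ the pair $(A_k,b_g)$ given by $$A_k(\theta)=\begin{pmatrix}0&1\\ kg(\theta)-\theta^2&0\end{pmatrix},\qquad b_g(\theta)=\begin{pmatrix}0\\ g(\theta)\end{pmatrix},$$ i.e. the family of harmonic oscillators $\partial_t^2y(t,\theta)+\theta^2y(t,\theta)=g(\theta)\big(ky(t,\theta)+u(t)\big)$ written in first-order form $\partial_t x(t,\theta)=A_k(\theta)x(t,\theta)+b_g(\theta)u(t)$, is uniformly ensemble reachable over $\mathbf{P}$.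
   Context: For continuous $A\colon\mathbf{P}\to\mathbb{C}^{n\times n}$, $B\colon\mathbf{P}\to\mathbb{C}^{n\times m}$ on a compact parameter set $\mathbf{P}$, the pair $(A,B)$ is uniformly ensemble reachable (from zero) if for every continuous $f\colon\mathbf{P}\to\mathbb{C}^n$ and every $\varepsilon>0$ there exist $T>0$ and an input $u\in L^1([0,T],\mathbb{C}^m)$ (independent of $\theta$) such that $\sup_{\theta\in\mathbf{P}}\big\|\int_0^Te^{A(\theta)(T-s)}B(\theta)u(s)\,ds-f(\theta)\big\|<\varepsilon$. *)

theory Defs
  imports "HOL-Analysis.Analysis"
begin

fun mat_pow :: "'a::comm_ring_1^'n::finite^'n \<Rightarrow> nat \<Rightarrow> 'a^'n^'n" where
  "mat_pow M 0 = mat 1"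
| "mat_pow M (Suc k) = M ** mat_pow M k"

definition mat_exp :: "complex^'n::finite^'n \<Rightarrow> complex^'n^'n" where
  "mat_exp M = (\<Sum>k. (1 / fact k) *\<^sub>R mat_pow M k)"

text \<open>Uniform ensemble reachability (from zero) of a parameter-dependent pair (A,B)
  over the parameter set P.  The condition
  sup over P of the error being < eps is written as: some delta < eps bounds the error
  at every parameter.\<close>

definition uniformly_ensemble_reachable ::
  "real set \<Rightarrow> (real \<Rightarrow> complex^'n::finite^'n) \<Rightarrow> (real \<Rightarrow> complex^'m::finite^'n) \<Rightarrow> bool" where
  "uniformly_ensemble_reachable P A B \<longleftrightarrow>
     (\<forall>f :: real \<Rightarrow> complex^'n. continuous_on P f \<longrightarrow>
        (\<forall>\<epsilon>>0. \<exists>T>0. \<exists>u :: real \<Rightarrow> complex^'m.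
            set_integrable lborel {0..T} u \<and>
            (\<exists>\<delta><\<epsilon>. \<forall>\<theta>\<in>P.
               norm ((LINT s:{0..T}|lborel. mat_exp ((T - s) *\<^sub>R A \<theta>) *v (B \<theta> *v u s)) - f \<theta>) \<le> \<delta>)))"

definition A_osc :: "real \<Rightarrow> (real \<Rightarrow> real) \<Rightarrow> real \<Rightarrow> complex^2^2" where
  "A_osc k g \<theta> = vector [vector [0, 1], vector [complex_of_real (k * g \<theta> - \<theta>^2), 0]]"

definition b_osc :: "(real \<Rightarrow> real) \<Rightarrow> real \<Rightarrow> complex^1^2" where
  "b_osc g \<theta> = vector [vector [0], vector [complex_of_real (g \<theta>)]]"

end

theory Submission
  imports Defs "HOL-Computational_Algebra.Polynomial"
begin

text \<open>The state reached at time 1 is \<open>\<integral>\<^sub>0\<^sup>1 exp ((1 - s) A \<theta>) B \<theta> u s ds\<close>, and the functions of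
  \<open>\<theta>\<close> that are uniform limits of such states form a closed linear space. A short pulse of the
  input \<open>v\<close> just before time \<open>1 - \<tau>\<close> reaches \<open>exp (\<tau> A) B v\<close> up to an error of the pulse length,
  and difference quotients in \<open>\<tau>\<close> then bring in every \<open>exp (\<tau> A) A\<^sup>j B v\<close>; at \<open>\<tau> = 0\<close> the
  space contains all \<open>A\<^sup>j B v\<close>. For the oscillator, \<open>A\<^sup>2\<^sup>n b\<close> and \<open>A\<^sup>2\<^sup>n\<^sup>+\<^sup>1 b\<close> are \<open>c\<^sup>n g\<close> in the
  second resp. first component, where \<open>c = k g - \<theta>\<^sup>2\<close>. The bound on \<open>k\<close> makes \<open>c' = k g' - 2 \<theta>\<close>
  nonvanishing, so \<open>c\<close> is injective and by Stone-Weierstrass polynomials in \<open>c\<close> are dense among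
  continuous functions; as \<open>g\<close> has no zeros, every continuous target is approximated.\<close>

section \<open>Matrix exponentials in a Banach algebra\<close>

text \<open>Bounded endomorphisms form a Banach algebra, in which the library's \<open>exp\<close> is available;
  matrices are embedded into it to reason about \<open>mat_exp\<close>.\<close>

typedef (overloaded) 'a endo = "UNIV :: ('a::real_normed_vector \<Rightarrow>\<^sub>L 'a) set"
  morphisms endo_rep endo_abs by simp

setup_lifting type_definition_endo

instantiation endo :: (real_normed_vector) real_normed_vector
begin
lift_definition norm_endo :: "'a endo \<Rightarrow> real" is norm .
lift_definition minus_endo :: "'a endo \<Rightarrow> 'a endo \<Rightarrow> 'a endo" is "(-)" .
lift_definition plus_endo :: "'a endo \<Rightarrow> 'a endo \<Rightarrow> 'a endo" is "(+)" .
lift_definition uminus_endo :: "'a endo \<Rightarrow> 'a endo" is "uminus" .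
lift_definition zero_endo :: "'a endo" is "0" .
lift_definition scaleR_endo :: "real \<Rightarrow> 'a endo \<Rightarrow> 'a endo" is "scaleR" .
definition dist_endo :: "'a endo \<Rightarrow> 'a endo \<Rightarrow> real" where
  "dist_endo a b = norm (a - b)"
definition sgn_endo :: "'a endo \<Rightarrow> 'a endo" where
  "sgn_endo x = scaleR (inverse (norm x)) x"
definition uniformity_endo :: "('a endo \<times> 'a endo) filter" where
  "uniformity_endo = (INF e\<in>{0 <..}. principal {(x, y). dist x y < e})"
definition open_endo :: "'a endo set \<Rightarrow> bool" where
  "open_endo S = (\<forall>x\<in>S. \<forall>\<^sub>F (x', y) in uniformity. x' = x \<longrightarrow> y \<in> S)"
instance
  apply standard
  unfolding dist_endo_def open_endo_def sgn_endo_def uniformity_endo_def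
  apply (rule refl | (transfer, force simp: algebra_simps norm_triangle_ineq))+
  done
end

instantiation endo :: ("{real_normed_vector, perfect_space}") real_normed_algebra_1
begin
lift_definition times_endo :: "'a endo \<Rightarrow> 'a endo \<Rightarrow> 'a endo" is "(o\<^sub>L)" .
lift_definition one_endo :: "'a endo" is "id_blinfun" .
instance
  apply standard
  apply (transfer, ((rule blinfun_eqI, simp add: blinfun.bilinear_simps)
     | (metis norm_blinfun_id norm_zero zero_neq_one) | rule norm_blinfun_compose | simp))+
  done
end

lemma dist_endo_rep: "dist (endo_rep x) (endo_rep y) = dist x y"
  by (simp add: dist_norm dist_endo_def norm_endo.rep_eq minus_endo.rep_eq)

instance endo :: (banach) banach
proof
  fix X :: "nat \<Rightarrow> 'a endo" assume "Cauchy X"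
  then have "Cauchy (\<lambda>n. endo_rep (X n))" unfolding Cauchy_def dist_endo_rep .
  then obtain L where "(\<lambda>n. endo_rep (X n)) \<longlonglongrightarrow> L"
    using Cauchy_convergent_iff convergent_def by blast
  then have "X \<longlonglongrightarrow> endo_abs L"
    unfolding lim_sequentially by (metis dist_endo_rep endo_abs_inverse UNIV_I)
  then show "convergent X" by (auto simp: convergent_def)
qed

definition endo_apply :: "'a::real_normed_vector endo \<Rightarrow> 'a \<Rightarrow> 'a" where
  "endo_apply E x = blinfun_apply (endo_rep E) x"

lemma endo_eqI: "(\<And>x. endo_apply a x = endo_apply b x) \<Longrightarrow> a = b"
  unfolding endo_apply_def by (metis endo_rep_inject blinfun_eqI)

lemma endo_apply_mult: "endo_apply (a * b) x = endo_apply a (endo_apply b x)"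
  unfolding endo_apply_def by (simp add: times_endo.rep_eq)

lemma endo_apply_one: "endo_apply 1 x = x"
  unfolding endo_apply_def by (simp add: one_endo.rep_eq)

lemma endo_apply_add: "endo_apply (a + b) x = endo_apply a x + endo_apply b x"
  unfolding endo_apply_def by (simp add: plus_endo.rep_eq blinfun.bilinear_simps)

lemma endo_apply_diff: "endo_apply (a - b) x = endo_apply a x - endo_apply b x"
  unfolding endo_apply_def by (simp add: minus_endo.rep_eq blinfun.bilinear_simps)

lemma endo_apply_scaleR: "endo_apply (r *\<^sub>R a) x = r *\<^sub>R endo_apply a x"
  unfolding endo_apply_def by (simp add: scaleR_endo.rep_eq blinfun.bilinear_simps)

lemma norm_endo_apply_le: "norm (endo_apply a x) \<le> norm a * norm x"
  unfolding endo_apply_def by (simp add: norm_endo.rep_eq norm_blinfun)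

lemma bounded_linear_endo_apply: "bounded_linear (\<lambda>a. endo_apply a x)"
proof -
  have "bounded_linear endo_rep"
  proof
    show "endo_rep (a + b) = endo_rep a + endo_rep b" for a b by (simp add: plus_endo.rep_eq)
    show "endo_rep (r *\<^sub>R b) = r *\<^sub>R endo_rep b" for r b by (simp add: scaleR_endo.rep_eq)
    show "\<exists>K. \<forall>x. norm (endo_rep x) \<le> norm x * K"
      by (rule exI[of _ 1]) (simp add: norm_endo.rep_eq)
  qed
  then show ?thesis
    unfolding endo_apply_def by (rule bounded_linear_compose[rotated]) simp
qed

definition endo_of_matrix :: "complex^'n^'n \<Rightarrow> (complex^'n) endo" where
  "endo_of_matrix M = endo_abs (Blinfun (\<lambda>x. M *v x))"

lemma endo_apply_endo_of_matrix: "endo_apply (endo_of_matrix M) x = M *v x"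
  unfolding endo_apply_def endo_of_matrix_def
  by (simp add: endo_abs_inverse bounded_linear_Blinfun_apply linear_conv_bounded_linear)

lemma endo_of_matrix_mult: "endo_of_matrix (A ** B) = endo_of_matrix A * endo_of_matrix B"
  by (rule endo_eqI) (simp add: endo_apply_endo_of_matrix endo_apply_mult matrix_vector_mul_assoc)

lemma endo_of_matrix_mat_pow: "endo_of_matrix (mat_pow M k) = endo_of_matrix M ^ k"
proof (induct k)
  case 0
  show ?case by (rule endo_eqI) (simp add: endo_apply_endo_of_matrix endo_apply_one)
qed (simp add: endo_of_matrix_mult)

lemma bounded_linear_endo_of_matrix: "bounded_linear endo_of_matrix"
proof -
  have scale: "(r *\<^sub>R A) *v x = r *\<^sub>R (A *v x)" for r and A :: "complex^'n^'n" and x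
    by (simp add: vec_eq_iff matrix_vector_mult_def scaleR_sum_right)
  have "linear endo_of_matrix"
    by (rule linearI; rule endo_eqI)
      (simp_all add: endo_apply_endo_of_matrix endo_apply_add endo_apply_scaleR
        matrix_vector_mult_add_rdistrib scale)
  then show ?thesis by (simp add: linear_conv_bounded_linear)
qed

lemma norm_matrix_le_norm_endo_of_matrix:
  "norm (X::complex^'n^'n) \<le> real (CARD('n) * CARD('n)) * norm (endo_of_matrix X)"
proof -
  have entry: "norm (X $ i $ j) \<le> norm (endo_of_matrix X)" for i j
  proof -
    have "norm (X $ i $ j) = norm ((X *v axis j 1) $ i)"
      by (simp add: matrix_vector_mult_def axis_def if_distrib cong: if_cong)
    also have "\<dots> \<le> norm (endo_apply (endo_of_matrix X) (axis j 1))"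
      unfolding endo_apply_endo_of_matrix by (rule Finite_Cartesian_Product.norm_nth_le)
    also have "\<dots> \<le> norm (endo_of_matrix X)"
    proof -
      have "axis j (1::complex) \<in> Basis" by (auto simp: Basis_vec_def)
      then show ?thesis
        using norm_endo_apply_le[of "endo_of_matrix X" "axis j (1::complex)"] by (simp add: norm_Basis)
    qed
    finally show ?thesis .
  qed
  have "norm X \<le> (\<Sum>i\<in>UNIV. norm (X $ i))"
    by (simp add: norm_vec_def L2_set_le_sum)
  also have "\<dots> \<le> (\<Sum>i\<in>UNIV. \<Sum>j\<in>UNIV. norm (X $ i $ j))"
    by (intro sum_mono) (simp add: norm_vec_def L2_set_le_sum)
  also have "\<dots> \<le> (\<Sum>i\<in>(UNIV::'n set). \<Sum>j\<in>(UNIV::'n set). norm (endo_of_matrix X))"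
    by (intro sum_mono entry)
  also have "\<dots> = real (CARD('n) * CARD('n)) * norm (endo_of_matrix X)"
    by simp
  finally show ?thesis .
qed

lemma endo_of_matrix_mat_exp:
  fixes M :: "complex^'n^'n"
  shows "endo_of_matrix (mat_exp M) = exp (endo_of_matrix M)"
proof -
  let ?f = "\<lambda>k. (1 / fact k) *\<^sub>R mat_pow M k"
  let ?E = "endo_of_matrix M"
  interpret L: bounded_linear endo_of_matrix by (rule bounded_linear_endo_of_matrix)
  have image: "endo_of_matrix (?f k) = ?E ^ k /\<^sub>R fact k" for k
    unfolding L.scaleR endo_of_matrix_mat_pow by (simp add: divide_inverse)
  \<comment> \<open>The matrix series converges because the matrix norm is dominated by the operator norm.\<close>
  have "norm (?f k) \<le> real (CARD('n) * CARD('n)) * (norm ?E ^ k /\<^sub>R fact k)" for k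
  proof -
    have "norm (endo_of_matrix (?f k)) \<le> norm ?E ^ k /\<^sub>R fact k"
      unfolding image norm_scaleR using norm_power_ineq[of ?E k]
      by (simp add: divide_right_mono)
    then have "real (CARD('n) * CARD('n)) * norm (endo_of_matrix (?f k))
        \<le> real (CARD('n) * CARD('n)) * (norm ?E ^ k /\<^sub>R fact k)"
      by (rule mult_left_mono) simp
    then show ?thesis by (rule order_trans[OF norm_matrix_le_norm_endo_of_matrix])
  qed
  then have "summable ?f"
    by (rule summable_comparison_test'[OF summable_mult[OF summable_exp_generic]])
  then have "endo_of_matrix (mat_exp M) = (\<Sum>k. endo_of_matrix (?f k))"
    unfolding mat_exp_def by (rule L.suminf)
  then show ?thesis unfolding image exp_def .
qed

lemma mat_exp_mult_vector: "mat_exp (r *\<^sub>R M) *v x = endo_apply (exp (r *\<^sub>R endo_of_matrix M)) x"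
proof -
  interpret L: bounded_linear endo_of_matrix by (rule bounded_linear_endo_of_matrix)
  show ?thesis
    unfolding endo_apply_endo_of_matrix[symmetric] endo_of_matrix_mat_exp L.scaleR ..
qed

lemma norm_exp_minus_taylor_le:
  fixes X :: "'a::{real_normed_algebra_1,banach}"
  shows "norm (exp X - (\<Sum>n<N. X^n /\<^sub>R fact n)) \<le> norm X ^ N * exp (norm X)"
proof -
  let ?r = "\<lambda>n. X^(n + N) /\<^sub>R fact (n + N)"
  let ?b = "\<lambda>n. norm X ^ N * (norm X ^ n / fact n)"
  have r: "?r sums (exp X - (\<Sum>n<N. X^n /\<^sub>R fact n))"
    using exp_converges[of X] sums_iff_shift[of "\<lambda>n. X^n /\<^sub>R fact n" N] by simp
  have b: "?b sums (norm X ^ N * exp (norm X))"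
    using exp_converges[of "norm X"] by (intro sums_mult) (simp add: divide_inverse mult.commute)
  have le: "norm (?r n) \<le> ?b n" for n
  proof -
    have "norm (?r n) = norm (X^(n + N)) / fact (n + N)"
      by (simp add: divide_inverse_commute)
    also have "\<dots> \<le> norm X ^ (n + N) / fact (n + N)"
      by (intro divide_right_mono norm_power_ineq) simp
    also have "\<dots> \<le> norm X ^ (n + N) / fact n"
      by (rule divide_left_mono[OF fact_mono]) auto
    also have "\<dots> = ?b n"
      by (simp only: power_add mult.commute times_divide_eq_right)
    finally show ?thesis .
  qed
  have summable: "summable (\<lambda>n. norm (?r n))"
    by (rule summable_comparison_test'[OF sums_summable[OF b]]) (use le in auto)
  have "norm (exp X - (\<Sum>n<N. X^n /\<^sub>R fact n)) = norm (\<Sum>n. ?r n)"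
    using r by (simp add: sums_iff)
  also have "\<dots> \<le> (\<Sum>n. norm (?r n))" by (rule summable_norm[OF summable])
  also have "\<dots> \<le> (\<Sum>n. ?b n)" by (rule suminf_le[OF le summable sums_summable[OF b]])
  also have "\<dots> = norm X ^ N * exp (norm X)" using b by (simp add: sums_iff)
  finally show ?thesis .
qed

lemma norm_exp_scaleR_le:
  fixes L :: "'a::{real_normed_algebra_1,banach}"
  assumes "norm L \<le> m" "0 \<le> t" "t \<le> 1"
  shows "norm (exp (t *\<^sub>R L)) \<le> exp m"
proof -
  have "norm (t *\<^sub>R L) \<le> m"
    using assms mult_left_le_one_le[of "norm L" t] by simp
  then have "exp (norm (t *\<^sub>R L)) \<le> exp m" by simp
  with norm_exp[of "t *\<^sub>R L"] show ?thesis by (rule order_trans)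
qed

lemma norm_exp_shift_minus_taylor_le:
  fixes L :: "'a::{real_normed_algebra_1,banach}"
  assumes L: "norm L \<le> m" and t: "0 \<le> t" "t \<le> 1" and d: "0 \<le> d" "d \<le> 1"
  shows "norm (exp ((t + d) *\<^sub>R L) - exp (t *\<^sub>R L) * (\<Sum>n<N. (d *\<^sub>R L)^n /\<^sub>R fact n))
    \<le> exp m * ((d * m) ^ N * exp m)"
proof -
  let ?T = "\<Sum>n<N. (d *\<^sub>R L)^n /\<^sub>R fact n"
  have dL: "norm (d *\<^sub>R L) \<le> d * m"
    using L d by (simp add: mult_left_mono)
  have "0 \<le> m" using L norm_ge_zero order_trans by blast
  then have dm: "0 \<le> d * m" "d * m \<le> m"
    using d by (simp_all add: mult_left_le_one_le)
  have "norm (d *\<^sub>R L) ^ N * exp (norm (d *\<^sub>R L)) \<le> (d * m) ^ N * exp m"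
  proof (rule mult_mono)
    show "norm (d *\<^sub>R L) ^ N \<le> (d * m) ^ N" by (rule power_mono[OF dL norm_ge_zero])
    show "exp (norm (d *\<^sub>R L)) \<le> exp m" using dL dm by simp
  qed (use dm in simp_all)
  with norm_exp_minus_taylor_le[of "d *\<^sub>R L" N]
  have remainder: "norm (exp (d *\<^sub>R L) - ?T) \<le> (d * m) ^ N * exp m"
    by (rule order_trans)
  have "exp ((t + d) *\<^sub>R L) = exp (t *\<^sub>R L) * exp (d *\<^sub>R L)"
    unfolding scaleR_add_left by (rule exp_add_commuting) (simp add: mult.commute)
  then have "norm (exp ((t + d) *\<^sub>R L) - exp (t *\<^sub>R L) * ?T)
      = norm (exp (t *\<^sub>R L) * (exp (d *\<^sub>R L) - ?T))"
    by (simp add: right_diff_distrib)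
  also have "\<dots> \<le> norm (exp (t *\<^sub>R L)) * norm (exp (d *\<^sub>R L) - ?T)"
    by (rule norm_mult_ineq)
  also have "\<dots> \<le> exp m * ((d * m) ^ N * exp m)"
    by (rule mult_mono[OF norm_exp_scaleR_le[OF L t] remainder]) auto
  finally show ?thesis .
qed

section \<open>Approximately reachable states\<close>

definition reach_integrand ::
  "(real \<Rightarrow> complex^'n^'n) \<Rightarrow> (real \<Rightarrow> complex^'m^'n) \<Rightarrow> (real \<Rightarrow> complex^'m) \<Rightarrow> real \<Rightarrow> real
    \<Rightarrow> complex^'n" where
  "reach_integrand A B u \<theta> s = mat_exp ((1 - s) *\<^sub>R A \<theta>) *v (B \<theta> *v u s)"

definition admissible_input ::
  "(real \<Rightarrow> complex^'n^'n) \<Rightarrow> (real \<Rightarrow> complex^'m^'n) \<Rightarrow> real set \<Rightarrow> (real \<Rightarrow> complex^'m) \<Rightarrow> bool"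
  where
  "admissible_input A B P u \<longleftrightarrow> set_integrable lborel {0..1} u \<and>
     (\<forall>\<theta>\<in>P. set_integrable lborel {0..1} (reach_integrand A B u \<theta>))"

definition endpoint ::
  "(real \<Rightarrow> complex^'n^'n) \<Rightarrow> (real \<Rightarrow> complex^'m^'n) \<Rightarrow> (real \<Rightarrow> complex^'m) \<Rightarrow> real \<Rightarrow> complex^'n"
  where
  "endpoint A B u \<theta> = (LINT s:{0..1}|lborel. reach_integrand A B u \<theta> s)"

text \<open>The horizon is fixed to 1; a single horizon suffices for uniform ensemble reachability.\<close>

definition approx_reachable ::
  "(real \<Rightarrow> complex^'n^'n) \<Rightarrow> (real \<Rightarrow> complex^'m^'n) \<Rightarrow> real set \<Rightarrow> (real \<Rightarrow> complex^'n) \<Rightarrow> bool"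
  where
  "approx_reachable A B P F \<longleftrightarrow>
     (\<forall>\<epsilon>>0. \<exists>u. admissible_input A B P u \<and> (\<forall>\<theta>\<in>P. norm (endpoint A B u \<theta> - F \<theta>) \<le> \<epsilon>))"

lemma uniformly_ensemble_reachableI:
  fixes A :: "real \<Rightarrow> complex^'n^'n" and B :: "real \<Rightarrow> complex^'m^'n"
  assumes "\<And>f. continuous_on P f \<Longrightarrow> approx_reachable A B P f"
  shows "uniformly_ensemble_reachable P A B"
  unfolding uniformly_ensemble_reachable_def
proof (intro allI impI)
  fix f :: "real \<Rightarrow> complex^'n" and \<epsilon> :: real
  assume "continuous_on P f" "\<epsilon> > 0"
  then obtain u where "admissible_input A B P u" "\<forall>\<theta>\<in>P. norm (endpoint A B u \<theta> - f \<theta>) \<le> \<epsilon>/2"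
    using assms unfolding approx_reachable_def by (meson half_gt_zero)
  then show "\<exists>T>0. \<exists>u. set_integrable lborel {0..T} u \<and> (\<exists>\<delta><\<epsilon>. \<forall>\<theta>\<in>P.
      norm ((LINT s:{0..T}|lborel. mat_exp ((T - s) *\<^sub>R A \<theta>) *v (B \<theta> *v u s)) - f \<theta>) \<le> \<delta>)"
    using \<open>\<epsilon> > 0\<close> unfolding admissible_input_def endpoint_def reach_integrand_def
    by (intro exI[of _ 1] conjI exI[of _ u] exI[of _ "\<epsilon>/2"]) auto
qed

lemma approx_reachable_zero: "approx_reachable A B P (\<lambda>\<theta>. 0)"
proof -
  have zero: "reach_integrand A B (\<lambda>s. 0) \<theta> = (\<lambda>s. 0)" for \<theta>
    by (simp add: reach_integrand_def fun_eq_iff)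
  have "admissible_input A B P (\<lambda>s. 0)"
    unfolding admissible_input_def zero by (simp add: set_integrable_def)
  moreover have "endpoint A B (\<lambda>s. 0) \<theta> = 0" for \<theta>
    unfolding endpoint_def zero by (simp add: set_lebesgue_integral_def)
  ultimately show ?thesis unfolding approx_reachable_def by auto
qed

lemma approx_reachable_add:
  assumes "approx_reachable A B P F" "approx_reachable A B P G"
  shows "approx_reachable A B P (\<lambda>\<theta>. F \<theta> + G \<theta>)"
  unfolding approx_reachable_def
proof (intro allI impI)
  fix \<epsilon> :: real assume "\<epsilon> > 0"
  then obtain u v where
    u: "admissible_input A B P u" "\<forall>\<theta>\<in>P. norm (endpoint A B u \<theta> - F \<theta>) \<le> \<epsilon>/2" and
    v: "admissible_input A B P v" "\<forall>\<theta>\<in>P. norm (endpoint A B v \<theta> - G \<theta>) \<le> \<epsilon>/2"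
    using assms unfolding approx_reachable_def by (meson half_gt_zero)
  have sum: "reach_integrand A B (\<lambda>s. u s + v s) \<theta>
      = (\<lambda>s. reach_integrand A B u \<theta> s + reach_integrand A B v \<theta> s)" for \<theta>
    by (simp add: fun_eq_iff reach_integrand_def matrix_vector_right_distrib)
  have "admissible_input A B P (\<lambda>s. u s + v s)"
    using u(1) v(1) unfolding admissible_input_def sum by auto
  moreover have "norm (endpoint A B (\<lambda>s. u s + v s) \<theta> - (F \<theta> + G \<theta>)) \<le> \<epsilon>" if "\<theta> \<in> P" for \<theta>
  proof -
    have "endpoint A B (\<lambda>s. u s + v s) \<theta> = endpoint A B u \<theta> + endpoint A B v \<theta>"
      using u(1) v(1) that unfolding endpoint_def sum admissible_input_def
      by (simp add: set_integral_add)
    then have "norm (endpoint A B (\<lambda>s. u s + v s) \<theta> - (F \<theta> + G \<theta>))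
       \<le> norm (endpoint A B u \<theta> - F \<theta>) + norm (endpoint A B v \<theta> - G \<theta>)"
      using norm_triangle_ineq[of "endpoint A B u \<theta> - F \<theta>" "endpoint A B v \<theta> - G \<theta>"]
      by (simp add: algebra_simps)
    also have "\<dots> \<le> \<epsilon>" using u(2) v(2) that by fastforce
    finally show ?thesis .
  qed
  ultimately show "\<exists>w. admissible_input A B P w \<and>
      (\<forall>\<theta>\<in>P. norm (endpoint A B w \<theta> - (F \<theta> + G \<theta>)) \<le> \<epsilon>)"
    by blast
qed

lemma approx_reachable_scaleR:
  assumes "approx_reachable A B P F"
  shows "approx_reachable A B P (\<lambda>\<theta>. r *\<^sub>R F \<theta>)"
proof (cases "r = 0")
  case True
  then show ?thesis using approx_reachable_zero by simp
next
  case False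
  show ?thesis unfolding approx_reachable_def
  proof (intro allI impI)
    fix \<epsilon> :: real assume "\<epsilon> > 0"
    then obtain u where u: "admissible_input A B P u"
        "\<forall>\<theta>\<in>P. norm (endpoint A B u \<theta> - F \<theta>) \<le> \<epsilon> / \<bar>r\<bar>"
      using assms False unfolding approx_reachable_def by (meson divide_pos_pos zero_less_abs_iff)
    have scaled: "reach_integrand A B (\<lambda>s. r *\<^sub>R u s) \<theta> = (\<lambda>s. r *\<^sub>R reach_integrand A B u \<theta> s)" for \<theta>
      by (simp add: fun_eq_iff reach_integrand_def linear_cmul[OF matrix_vector_mul_linear])
    have "admissible_input A B P (\<lambda>s. r *\<^sub>R u s)"
      using u(1) unfolding admissible_input_def scaled by auto
    moreover have "norm (endpoint A B (\<lambda>s. r *\<^sub>R u s) \<theta> - r *\<^sub>R F \<theta>) \<le> \<epsilon>" if "\<theta> \<in> P" for \<theta>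
    proof -
      have "norm (endpoint A B (\<lambda>s. r *\<^sub>R u s) \<theta> - r *\<^sub>R F \<theta>) = \<bar>r\<bar> * norm (endpoint A B u \<theta> - F \<theta>)"
        unfolding endpoint_def scaled by (simp add: scaleR_diff_right[symmetric])
      also have "\<dots> \<le> \<bar>r\<bar> * (\<epsilon> / \<bar>r\<bar>)" using u(2) that by (intro mult_left_mono) auto
      also have "\<dots> = \<epsilon>" using False by simp
      finally show ?thesis .
    qed
    ultimately show "\<exists>w. admissible_input A B P w \<and>
        (\<forall>\<theta>\<in>P. norm (endpoint A B w \<theta> - r *\<^sub>R F \<theta>) \<le> \<epsilon>)"
      by blast
  qed
qed

lemma approx_reachable_diff:
  assumes "approx_reachable A B P F" "approx_reachable A B P G"
  shows "approx_reachable A B P (\<lambda>\<theta>. F \<theta> - G \<theta>)"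
  using approx_reachable_add[OF assms(1) approx_reachable_scaleR[OF assms(2), of "-1"]] by simp

lemma approx_reachable_sum:
  fixes N :: nat
  assumes "\<And>n. n \<le> N \<Longrightarrow> approx_reachable A B P (F n)"
  shows "approx_reachable A B P (\<lambda>\<theta>. \<Sum>n\<le>N. F n \<theta>)"
  using assms by (induct N) (simp_all add: approx_reachable_add)

lemma approx_reachable_uniform_limit:
  assumes "\<And>\<epsilon>. \<epsilon> > 0 \<Longrightarrow> \<exists>F. approx_reachable A B P F \<and> (\<forall>\<theta>\<in>P. norm (F \<theta> - G \<theta>) \<le> \<epsilon>)"
  shows "approx_reachable A B P G"
  unfolding approx_reachable_def
proof (intro allI impI)
  fix \<epsilon> :: real assume "\<epsilon> > 0"
  then obtain F where F: "approx_reachable A B P F" "\<forall>\<theta>\<in>P. norm (F \<theta> - G \<theta>) \<le> \<epsilon>/2"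
    using assms[of "\<epsilon>/2"] by auto
  obtain u where u: "admissible_input A B P u" "\<forall>\<theta>\<in>P. norm (endpoint A B u \<theta> - F \<theta>) \<le> \<epsilon>/2"
    using F(1) \<open>\<epsilon> > 0\<close> unfolding approx_reachable_def by (meson half_gt_zero)
  have "norm (endpoint A B u \<theta> - G \<theta>) \<le> \<epsilon>" if "\<theta> \<in> P" for \<theta>
  proof -
    have "norm (endpoint A B u \<theta> - G \<theta>) \<le> norm (endpoint A B u \<theta> - F \<theta>) + norm (F \<theta> - G \<theta>)"
      using norm_triangle_ineq[of "endpoint A B u \<theta> - F \<theta>" "F \<theta> - G \<theta>"] by simp
    then show ?thesis using u(2) F(2) that by fastforce
  qed
  with u(1) show "\<exists>u. admissible_input A B P u \<and> (\<forall>\<theta>\<in>P. norm (endpoint A B u \<theta> - G \<theta>) \<le> \<epsilon>)"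
    by blast
qed

lemma set_integral_indicator_interval:
  fixes W :: "real \<Rightarrow> 'b::euclidean_space"
  assumes "0 \<le> a" "b \<le> 1" and W: "continuous_on {a..b} W"
  shows "set_integrable lborel {0..1} (\<lambda>s. indicator {a..b} s *\<^sub>R W s)"
    and "(LINT s:{0..1}|lborel. indicator {a..b} s *\<^sub>R W s) = integral {a..b} W"
proof -
  have restrict: "(\<lambda>s. indicator {0..1} s *\<^sub>R (indicator {a..b} s *\<^sub>R W s))
      = (\<lambda>s. indicator {a..b} s *\<^sub>R W s)"
    using assms by (auto simp: fun_eq_iff indicator_def)
  have W_integrable: "set_integrable lborel {a..b} W"
    by (rule borel_integrable_atLeastAtMost'[OF W])
  then show "set_integrable lborel {0..1} (\<lambda>s. indicator {a..b} s *\<^sub>R W s)"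
    unfolding set_integrable_def restrict .
  have "(LINT s:{0..1}|lborel. indicator {a..b} s *\<^sub>R W s) = (LINT s:{a..b}|lborel. W s)"
    unfolding set_lebesgue_integral_def restrict ..
  also have "\<dots> = integral {a..b} W"
    by (rule set_borel_integral_eq_integral(2)[OF W_integrable])
  finally show "(LINT s:{0..1}|lborel. indicator {a..b} s *\<^sub>R W s) = integral {a..b} W" .
qed

lemma continuous_on_endo_apply_exp:
  fixes L :: "'a::{banach,perfect_space} endo"
  shows "continuous_on S (\<lambda>s. endo_apply (exp ((1 - s) *\<^sub>R L)) w)"
proof -
  have "continuous_on UNIV (\<lambda>t. exp (t *\<^sub>R L))"
    by (metis continuous_at_imp_continuous_on exp_scaleR_has_vector_derivative_right
        has_vector_derivative_continuous)
  then have "continuous_on S (\<lambda>s. exp ((1 - s) *\<^sub>R L))"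
    by (rule continuous_on_compose2) (auto intro!: continuous_intros)
  then show ?thesis by (rule bounded_linear.continuous_on[OF bounded_linear_endo_apply])
qed

definition exp_pow_term ::
  "(real \<Rightarrow> complex^'n^'n) \<Rightarrow> (real \<Rightarrow> complex^'m^'n) \<Rightarrow> complex^'m \<Rightarrow> nat \<Rightarrow> real \<Rightarrow> real \<Rightarrow> complex^'n"
  where
  "exp_pow_term A B v j \<tau> \<theta> =
     endo_apply (exp (\<tau> *\<^sub>R endo_of_matrix (A \<theta>)) * endo_of_matrix (A \<theta>) ^ j) (B \<theta> *v v)"

text \<open>A pulse of height \<open>1/h\<close> on \<open>[1 - \<tau> - h, 1 - \<tau>]\<close> steers to \<open>exp (\<tau> A) B v\<close> up to
  an error of order \<open>h\<close>, uniformly in the parameter.\<close>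

lemma approx_reachable_exp_pow_0:
  assumes A: "\<And>\<theta>. \<theta> \<in> P \<Longrightarrow> norm (endo_of_matrix (A \<theta>)) \<le> m" and "0 \<le> m"
    and Bv: "\<And>\<theta>. \<theta> \<in> P \<Longrightarrow> norm (B \<theta> *v v) \<le> \<beta>" and "0 \<le> \<beta>"
    and \<tau>: "0 \<le> \<tau>" "\<tau> < 1"
  shows "approx_reachable A B P (exp_pow_term A B v 0 \<tau>)"
  unfolding approx_reachable_def
proof (intro allI impI)
  fix \<epsilon> :: real assume "\<epsilon> > 0"
  define K where "K = exp m * m * exp m * \<beta> + 1"
  have "K > 0" unfolding K_def using \<open>0 \<le> m\<close> \<open>0 \<le> \<beta>\<close> by (intro add_nonneg_pos) auto
  define h where "h = min (1 - \<tau>) (\<epsilon> / K)"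
  have h: "0 < h" "h \<le> 1 - \<tau>" "h \<le> \<epsilon> / K"
    unfolding h_def using \<tau> \<open>\<epsilon> > 0\<close> \<open>K > 0\<close> by auto
  define a where "a = 1 - \<tau> - h"
  define b where "b = 1 - \<tau>"
  have ab: "0 \<le> a" "b \<le> 1" "a \<le> b" "b - a = h" unfolding a_def b_def using h \<tau> by auto
  define u where "u = (\<lambda>s. indicator {a..b} s *\<^sub>R ((1/h) *\<^sub>R v))"
  define W where
    "W = (\<lambda>\<theta> s. (1/h) *\<^sub>R endo_apply (exp ((1 - s) *\<^sub>R endo_of_matrix (A \<theta>))) (B \<theta> *v v))"
  have integrand: "reach_integrand A B u \<theta> = (\<lambda>s. indicator {a..b} s *\<^sub>R W \<theta> s)" for \<theta>
    by (simp add: fun_eq_iff reach_integrand_def u_def W_def linear_cmul[OF matrix_vector_mul_linear]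
        mat_exp_mult_vector)
  have W: "continuous_on {a..b} (W \<theta>)" for \<theta>
    unfolding W_def by (intro continuous_intros continuous_on_endo_apply_exp)
  have "admissible_input A B P u"
    unfolding admissible_input_def integrand
    using set_integral_indicator_interval(1)[OF ab(1,2) W]
      set_integral_indicator_interval(1)[OF ab(1,2), of "\<lambda>s. (1/h) *\<^sub>R v"]
    by (simp add: u_def)
  moreover have "norm (endpoint A B u \<theta> - exp_pow_term A B v 0 \<tau> \<theta>) \<le> \<epsilon>" if "\<theta> \<in> P" for \<theta>
  proof -
    let ?L = "endo_of_matrix (A \<theta>)"
    let ?T = "exp_pow_term A B v 0 \<tau> \<theta>"
    have const: "integral {a..b} (\<lambda>s. (1/h) *\<^sub>R ?T) = ?T" using ab h by simp
    have "endpoint A B u \<theta> - ?T = integral {a..b} (W \<theta>) - integral {a..b} (\<lambda>s. (1/h) *\<^sub>R ?T)"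
      unfolding endpoint_def integrand set_integral_indicator_interval(2)[OF ab(1,2) W] const ..
    also have "\<dots> = integral {a..b} (\<lambda>s. W \<theta> s - (1/h) *\<^sub>R ?T)"
      by (rule integral_diff[symmetric]) (auto intro: integrable_continuous_interval W)
    also have "norm \<dots> \<le> ((1/h) * (exp m * (h * m * exp m) * \<beta>)) * (b - a)"
    proof (rule integral_bound[OF ab(3)])
      show "continuous_on {a..b} (\<lambda>s. W \<theta> s - (1/h) *\<^sub>R ?T)" by (intro continuous_intros W)
      fix s assume s: "s \<in> {a..b}"
      define d where "d = 1 - s - \<tau>"
      have d: "0 \<le> d" "d \<le> h" "d \<le> 1" "1 - s = \<tau> + d"
        using s ab h \<tau> unfolding d_def a_def b_def by auto
      have "norm (exp ((\<tau> + d) *\<^sub>R ?L) - exp (\<tau> *\<^sub>R ?L)) \<le> exp m * (d * m * exp m)"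
        using norm_exp_shift_minus_taylor_le[OF A[OF that] \<tau>(1) _ d(1,3), of 1] \<tau> by simp
      also have "\<dots> \<le> exp m * (h * m * exp m)"
        using d \<open>0 \<le> m\<close> by (intro mult_left_mono mult_right_mono) auto
      finally have step: "norm (exp ((\<tau> + d) *\<^sub>R ?L) - exp (\<tau> *\<^sub>R ?L)) \<le> exp m * (h * m * exp m)" .
      have "W \<theta> s - (1/h) *\<^sub>R ?T
          = (1/h) *\<^sub>R endo_apply (exp ((\<tau> + d) *\<^sub>R ?L) - exp (\<tau> *\<^sub>R ?L)) (B \<theta> *v v)"
        unfolding W_def exp_pow_term_def d(4) by (simp add: endo_apply_diff scaleR_diff_right)
      also have "norm \<dots> = (1/h) * norm (endo_apply (exp ((\<tau> + d) *\<^sub>R ?L) - exp (\<tau> *\<^sub>R ?L)) (B \<theta> *v v))"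
        using h by simp
      also have "\<dots> \<le> (1/h) * (norm (exp ((\<tau> + d) *\<^sub>R ?L) - exp (\<tau> *\<^sub>R ?L)) * norm (B \<theta> *v v))"
        using h by (intro mult_left_mono norm_endo_apply_le) simp
      also have "\<dots> \<le> (1/h) * (exp m * (h * m * exp m) * \<beta>)"
        using h Bv[OF that] step \<open>0 \<le> m\<close> by (intro mult_left_mono mult_mono) auto
      finally show "norm (W \<theta> s - (1/h) *\<^sub>R ?T) \<le> (1/h) * (exp m * (h * m * exp m) * \<beta>)" .
    qed
    also have "\<dots> = h * (exp m * m * exp m * \<beta>)" using ab h by (simp add: field_simps)
    also have "\<dots> \<le> h * K" unfolding K_def using h by (intro mult_left_mono) auto
    also have "\<dots> \<le> \<epsilon>" using h \<open>K > 0\<close> by (simp add: field_simps)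
    finally show ?thesis .
  qed
  ultimately show "\<exists>u. admissible_input A B P u \<and>
      (\<forall>\<theta>\<in>P. norm (endpoint A B u \<theta> - exp_pow_term A B v 0 \<tau> \<theta>) \<le> \<epsilon>)"
    by blast
qed

text \<open>The difference quotients in \<open>\<tau>\<close> converge to the next term uniformly in \<open>\<theta>\<close>, with an error
  proportional to the step.\<close>

lemma approx_reachable_exp_pow_Suc:
  assumes A: "\<And>\<theta>. \<theta> \<in> P \<Longrightarrow> norm (endo_of_matrix (A \<theta>)) \<le> m" and "0 \<le> m"
    and Bv: "\<And>\<theta>. \<theta> \<in> P \<Longrightarrow> norm (B \<theta> *v v) \<le> \<beta>" and "0 \<le> \<beta>"
    and IH: "\<And>\<tau>. 0 \<le> \<tau> \<Longrightarrow> \<tau> < 1 \<Longrightarrow> approx_reachable A B P (exp_pow_term A B v j \<tau>)"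
    and \<tau>: "0 \<le> \<tau>" "\<tau> < 1"
  shows "approx_reachable A B P (exp_pow_term A B v (Suc j) \<tau>)"
proof (rule approx_reachable_uniform_limit)
  fix \<epsilon> :: real assume "\<epsilon> > 0"
  define K where "K = exp m * m\<^sup>2 * exp m * m^j * \<beta> + 1"
  have "K > 0" unfolding K_def using \<open>0 \<le> m\<close> \<open>0 \<le> \<beta>\<close> by (intro add_nonneg_pos) auto
  define d where "d = min ((1 - \<tau>)/2) (\<epsilon> / K)"
  have "d \<le> (1 - \<tau>)/2" "d \<le> \<epsilon> / K"
    unfolding d_def by (rule min.cobounded1, rule min.cobounded2)
  moreover have "0 < d" unfolding d_def using \<tau> \<open>\<epsilon> > 0\<close> \<open>K > 0\<close> by simp
  ultimately have d: "0 < d" "d \<le> (1 - \<tau>)/2" "d \<le> \<epsilon> / K" by blast+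
  define F where "F = (\<lambda>\<theta>. (1/d) *\<^sub>R (exp_pow_term A B v j (\<tau> + d) \<theta> - exp_pow_term A B v j \<tau> \<theta>))"
  have "approx_reachable A B P F"
    unfolding F_def using IH[OF \<tau>] IH[of "\<tau> + d"] \<tau> d
    by (intro approx_reachable_scaleR approx_reachable_diff) auto
  moreover have "norm (F \<theta> - exp_pow_term A B v (Suc j) \<tau> \<theta>) \<le> \<epsilon>" if "\<theta> \<in> P" for \<theta>
  proof -
    let ?L = "endo_of_matrix (A \<theta>)"
    let ?X = "exp ((\<tau> + d) *\<^sub>R ?L) - exp (\<tau> *\<^sub>R ?L) * (1 + d *\<^sub>R ?L)"
    have "?X * ?L^j = exp ((\<tau> + d) *\<^sub>R ?L) * ?L^j - exp (\<tau> *\<^sub>R ?L) * ((1 + d *\<^sub>R ?L) * ?L^j)"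
      by (simp only: left_diff_distrib mult.assoc)
    also have "(1 + d *\<^sub>R ?L) * ?L^j = ?L^j + d *\<^sub>R ?L^Suc j"
      by (simp only: distrib_right mult_1_left scaleR_left_commute power_Suc mult_scaleR_left)
    finally have "?X * ?L^j = exp ((\<tau> + d) *\<^sub>R ?L) * ?L^j - exp (\<tau> *\<^sub>R ?L) * ?L^j
        - d *\<^sub>R (exp (\<tau> *\<^sub>R ?L) * ?L^Suc j)"
      by (simp only: distrib_left mult_scaleR_right diff_diff_eq)
    then have "F \<theta> - exp_pow_term A B v (Suc j) \<tau> \<theta> = (1/d) *\<^sub>R endo_apply (?X * ?L^j) (B \<theta> *v v)"
      unfolding F_def exp_pow_term_def using d
      by (simp add: endo_apply_diff endo_apply_scaleR scaleR_diff_right)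
    also have "norm \<dots> = (1/d) * norm (endo_apply (?X * ?L^j) (B \<theta> *v v))"
      using d by simp
    also have "\<dots> \<le> (1/d) * (exp m * ((d * m)\<^sup>2 * exp m) * m^j * \<beta>)"
    proof (intro mult_left_mono)
      have "norm ?X \<le> exp m * ((d * m)\<^sup>2 * exp m)"
        using norm_exp_shift_minus_taylor_le[OF A[OF that] \<tau>(1) _ _ _, of d 2] \<tau> d
        by (simp add: numeral_2_eq_2)
      moreover have "norm (?L^j) \<le> m^j"
        using norm_power_ineq[of ?L j] power_mono[OF A[OF that], of j] by simp
      ultimately have "norm (?X * ?L^j) \<le> exp m * ((d * m)\<^sup>2 * exp m) * m^j"
        by (intro order_trans[OF norm_mult_ineq] mult_mono) auto
      then show "norm (endo_apply (?X * ?L^j) (B \<theta> *v v)) \<le> exp m * ((d * m)\<^sup>2 * exp m) * m^j * \<beta>"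
        using Bv[OF that] \<open>0 \<le> m\<close>
        by (intro order_trans[OF norm_endo_apply_le] mult_mono) auto
    qed (use d in simp)
    also have "\<dots> = d * (exp m * m\<^sup>2 * exp m * m^j * \<beta>)"
      using d by (simp add: power2_eq_square)
    also have "\<dots> \<le> d * K" unfolding K_def using d by (intro mult_left_mono) auto
    also have "\<dots> \<le> \<epsilon>" using d \<open>K > 0\<close> by (simp add: field_simps)
    finally show ?thesis .
  qed
  ultimately show "\<exists>F. approx_reachable A B P F \<and>
      (\<forall>\<theta>\<in>P. norm (F \<theta> - exp_pow_term A B v (Suc j) \<tau> \<theta>) \<le> \<epsilon>)"
    by blast
qed

lemma approx_reachable_mat_pow:
  fixes A :: "real \<Rightarrow> complex^'n^'n"
  assumes "bounded (A ` P)" and "bounded ((\<lambda>\<theta>. B \<theta> *v v) ` P)"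
  shows "approx_reachable A B P (\<lambda>\<theta>. mat_pow (A \<theta>) j *v (B \<theta> *v v))"
proof -
  obtain a where a: "\<And>\<theta>. \<theta> \<in> P \<Longrightarrow> norm (A \<theta>) \<le> a"
    using assms(1) unfolding bounded_iff by auto
  obtain c where "c > 0" and c: "\<And>X :: complex^'n^'n. norm (endo_of_matrix X) \<le> norm X * c"
    using bounded_linear.pos_bounded[OF bounded_linear_endo_of_matrix] by blast
  have A: "norm (endo_of_matrix (A \<theta>)) \<le> \<bar>a\<bar> * c" if "\<theta> \<in> P" for \<theta>
  proof -
    have "norm (endo_of_matrix (A \<theta>)) \<le> norm (A \<theta>) * c" by (rule c)
    also have "\<dots> \<le> \<bar>a\<bar> * c" using \<open>c > 0\<close> a[OF that] by (intro mult_right_mono) auto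
    finally show ?thesis .
  qed
  obtain \<beta> where Bv: "\<And>\<theta>. \<theta> \<in> P \<Longrightarrow> norm (B \<theta> *v v) \<le> \<beta>" and "0 \<le> \<beta>"
    using assms(2) unfolding bounded_pos by (auto intro: less_imp_le)
  have "0 \<le> \<bar>a\<bar> * c" using \<open>c > 0\<close> by simp
  have "approx_reachable A B P (exp_pow_term A B v j \<tau>)" if "0 \<le> \<tau>" "\<tau> < 1" for \<tau>
    using that
  proof (induct j arbitrary: \<tau>)
    case 0
    show ?case using 0 by (intro approx_reachable_exp_pow_0[OF A \<open>0 \<le> \<bar>a\<bar> * c\<close> Bv \<open>0 \<le> \<beta>\<close>])
  next
    case (Suc j)
    show ?case
      using Suc by (intro approx_reachable_exp_pow_Suc[OF A \<open>0 \<le> \<bar>a\<bar> * c\<close> Bv \<open>0 \<le> \<beta>\<close>])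
  qed
  moreover have "exp_pow_term A B v j 0 = (\<lambda>\<theta>. mat_pow (A \<theta>) j *v (B \<theta> *v v))"
    by (simp add: fun_eq_iff exp_pow_term_def endo_of_matrix_mat_pow[symmetric]
        endo_apply_endo_of_matrix)
  ultimately show ?thesis by fastforce
qed

section \<open>The oscillator family\<close>

lemma vector2_eqI: "(x::'a^2) $ 1 = y $ 1 \<Longrightarrow> x $ 2 = y $ 2 \<Longrightarrow> x = y"
  by (simp add: vec_eq_iff forall_2)

lemma norm_vector2_le: "norm (vector [x, y] :: 'a::real_normed_vector^2) \<le> norm x + norm y"
  using L2_set_le_sum[of "UNIV :: 2 set" "\<lambda>i. norm (vector [x, y] $ i :: 'a)"]
  by (simp add: norm_vec_def sum_2)

lemma sum_vector2:
  "(\<Sum>n\<in>S. vector [a n, b n] :: 'a::comm_monoid_add^2) = vector [\<Sum>n\<in>S. a n, \<Sum>n\<in>S. b n]"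
  by (rule vector2_eqI) simp_all

lemma b_osc_mult_vector: "b_osc g \<theta> *v v = vector [0, complex_of_real (g \<theta>) * v $ 1]"
  by (rule vector2_eqI) (simp_all add: b_osc_def matrix_vector_mult_def sum_1)

lemma A_osc_mult_vector:
  "A_osc k g \<theta> *v vector [x, y] = vector [y, complex_of_real (k * g \<theta> - \<theta>\<^sup>2) * x]"
  by (rule vector2_eqI) (simp_all add: A_osc_def matrix_vector_mult_def sum_2)

lemma A_osc_pow_mult_vector:
  shows "mat_pow (A_osc k g \<theta>) (2 * n) *v vector [0, w]
      = vector [0, complex_of_real (k * g \<theta> - \<theta>\<^sup>2) ^ n * w]"
    and "mat_pow (A_osc k g \<theta>) (2 * n + 1) *v vector [0, w]
      = vector [complex_of_real (k * g \<theta> - \<theta>\<^sup>2) ^ n * w, 0]"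
proof -
  show "mat_pow (A_osc k g \<theta>) (2 * n) *v vector [0, w]
      = vector [0, complex_of_real (k * g \<theta> - \<theta>\<^sup>2) ^ n * w]"
  proof (induct n)
    case (Suc n)
    have "2 * Suc n = Suc (Suc (2 * n))" by simp
    then show ?case
      using Suc by (simp add: matrix_vector_mul_assoc[symmetric] A_osc_mult_vector mult.assoc)
  qed simp
  then show "mat_pow (A_osc k g \<theta>) (2 * n + 1) *v vector [0, w]
      = vector [complex_of_real (k * g \<theta> - \<theta>\<^sup>2) ^ n * w, 0]"
    by (simp add: matrix_vector_mul_assoc[symmetric] A_osc_mult_vector)
qed

lemma norm_A_osc_le: "norm (A_osc k g \<theta>) \<le> 1 + \<bar>k * g \<theta> - \<theta>\<^sup>2\<bar>"
proof -
  have "norm (A_osc k g \<theta>) \<le> norm (vector [0, 1] :: complex^2)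
      + norm (vector [complex_of_real (k * g \<theta> - \<theta>\<^sup>2), 0] :: complex^2)"
    unfolding A_osc_def by (rule norm_vector2_le)
  also have "\<dots> \<le> (norm (0::complex) + norm (1::complex))
      + (norm (complex_of_real (k * g \<theta> - \<theta>\<^sup>2)) + norm (0::complex))"
    by (intro add_mono norm_vector2_le)
  finally show ?thesis by (simp only: norm_of_real norm_zero norm_one add_0_left add_0_right)
qed

lemma approx_reachable_osc_poly:
  assumes "compact P" and "continuous_on P g"
  shows "approx_reachable (A_osc k g) (b_osc g) P
      (\<lambda>\<theta>. vector [complex_of_real (g \<theta>) * w * complex_of_real (poly p (k * g \<theta> - \<theta>\<^sup>2)), 0])"
    and "approx_reachable (A_osc k g) (b_osc g) P
      (\<lambda>\<theta>. vector [0, complex_of_real (g \<theta>) * w * complex_of_real (poly p (k * g \<theta> - \<theta>\<^sup>2))])"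
proof -
  let ?c = "\<lambda>\<theta>. k * g \<theta> - \<theta>\<^sup>2"
  have "continuous_on P ?c" by (intro continuous_intros assms(2))
  then have "bounded (?c ` P)" by (rule compact_imp_bounded[OF compact_continuous_image[OF _ assms(1)]])
  then obtain C where C: "\<And>\<theta>. \<theta> \<in> P \<Longrightarrow> \<bar>?c \<theta>\<bar> \<le> C"
    unfolding bounded_iff by auto
  have "bounded (g ` P)" by (rule compact_imp_bounded[OF compact_continuous_image[OF assms(2,1)]])
  then obtain G where G: "\<And>\<theta>. \<theta> \<in> P \<Longrightarrow> \<bar>g \<theta>\<bar> \<le> G"
    unfolding bounded_iff by auto
  have "norm (A_osc k g \<theta>) \<le> 1 + C" if "\<theta> \<in> P" for \<theta>
    using norm_A_osc_le[of k g \<theta>] C[OF that] by simp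
  then have A: "bounded (A_osc k g ` P)" unfolding bounded_iff by blast
  have b: "bounded ((\<lambda>\<theta>. b_osc g \<theta> *v vector [z]) ` P)" for z
  proof -
    have "norm (b_osc g \<theta> *v vector [z]) \<le> G * cmod z" if "\<theta> \<in> P" for \<theta>
    proof -
      have "norm (b_osc g \<theta> *v vector [z]) \<le> norm (0::complex) + norm (complex_of_real (g \<theta>) * z)"
        unfolding b_osc_mult_vector vector_1 by (rule norm_vector2_le)
      also have "\<dots> \<le> G * cmod z" using G[OF that] by (simp add: norm_mult mult_right_mono)
      finally show ?thesis .
    qed
    then show ?thesis unfolding bounded_iff by blast
  qed
  have odd: "approx_reachable (A_osc k g) (b_osc g) P
      (\<lambda>\<theta>. vector [complex_of_real (?c \<theta>) ^ n * (complex_of_real (g \<theta>) * z), 0])" for n z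
    using approx_reachable_mat_pow[OF A b[of z], where j = "2 * n + 1"]
    by (simp only: b_osc_mult_vector vector_1 A_osc_pow_mult_vector)
  have even: "approx_reachable (A_osc k g) (b_osc g) P
      (\<lambda>\<theta>. vector [0, complex_of_real (?c \<theta>) ^ n * (complex_of_real (g \<theta>) * z)])" for n z
    using approx_reachable_mat_pow[OF A b[of z], where j = "2 * n"]
    by (simp only: b_osc_mult_vector vector_1 A_osc_pow_mult_vector)
  have poly: "complex_of_real (g \<theta>) * w * complex_of_real (poly p (?c \<theta>))
      = (\<Sum>n\<le>degree p. complex_of_real (?c \<theta>) ^ n * (complex_of_real (g \<theta>) * (w * coeff p n)))" for \<theta>
    by (simp add: poly_altdef sum_distrib_left mult_ac)
  show "approx_reachable (A_osc k g) (b_osc g) P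
      (\<lambda>\<theta>. vector [complex_of_real (g \<theta>) * w * complex_of_real (poly p (?c \<theta>)), 0])"
    using approx_reachable_sum[of "degree p", OF odd] unfolding poly sum_vector2 by simp
  show "approx_reachable (A_osc k g) (b_osc g) P
      (\<lambda>\<theta>. vector [0, complex_of_real (g \<theta>) * w * complex_of_real (poly p (?c \<theta>))])"
    using approx_reachable_sum[of "degree p", OF even] unfolding poly sum_vector2 by simp
qed

lemma Stone_Weierstrass_poly_comp:
  fixes c \<phi> :: "real \<Rightarrow> real"
  assumes "compact P" and c: "continuous_on P c" "inj_on c P"
    and "continuous_on P \<phi>" and "e > 0"
  shows "\<exists>p. \<forall>x\<in>P. \<bar>\<phi> x - poly p (c x)\<bar> < e"
proof -
  let ?poly_comp = "\<lambda>f. \<exists>p. f = (\<lambda>x. poly p (c x))"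
  have "\<exists>h. ?poly_comp h \<and> (\<forall>x\<in>P. \<bar>\<phi> x - h x\<bar> < e)"
  proof (rule Stone_Weierstrass_HOL[OF \<open>compact P\<close> _ _ _ _ _ \<open>continuous_on P \<phi>\<close> \<open>e > 0\<close>])
    show "?poly_comp (\<lambda>x. a)" for a by (rule exI[of _ "[:a:]"]) simp
    show "continuous_on P f" if "?poly_comp f" for f
      using that c by (auto intro!: continuous_intros)
    show "?poly_comp (\<lambda>x. f x + h x)" and "?poly_comp (\<lambda>x. f x * h x)"
      if fh: "?poly_comp f \<and> ?poly_comp h" for f h
    proof -
      obtain p q where "f = (\<lambda>x. poly p (c x))" "h = (\<lambda>x. poly q (c x))" using fh by blast
      then show "?poly_comp (\<lambda>x. f x + h x)" and "?poly_comp (\<lambda>x. f x * h x)"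
        by (auto intro: exI[of _ "p + q"] exI[of _ "p * q"])
    qed
    show "\<exists>f. ?poly_comp f \<and> f x \<noteq> f y" if "x \<in> P \<and> y \<in> P \<and> x \<noteq> y" for x y
      using that c by (intro exI[of _ c]) (auto simp: inj_on_def intro!: exI[of _ "[:0, 1:]"])
  qed
  then show ?thesis by auto
qed

lemma Stone_Weierstrass_complex_poly_comp:
  fixes c :: "real \<Rightarrow> real" and \<phi> :: "real \<Rightarrow> complex"
  assumes "compact P" and "continuous_on P c" "inj_on c P"
    and "continuous_on P \<phi>" and "e > 0"
  shows "\<exists>p q. \<forall>x\<in>P. cmod (\<phi> x - (of_real (poly p (c x)) + \<i> * of_real (poly q (c x)))) < e"
proof -
  obtain p where p: "\<forall>x\<in>P. \<bar>Re (\<phi> x) - poly p (c x)\<bar> < e/2"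
    using Stone_Weierstrass_poly_comp[OF assms(1-3), of "\<lambda>x. Re (\<phi> x)" "e/2"] assms(4,5)
    by (auto intro: continuous_intros)
  obtain q where q: "\<forall>x\<in>P. \<bar>Im (\<phi> x) - poly q (c x)\<bar> < e/2"
    using Stone_Weierstrass_poly_comp[OF assms(1-3), of "\<lambda>x. Im (\<phi> x)" "e/2"] assms(4,5)
    by (auto intro: continuous_intros)
  have "cmod (\<phi> x - (of_real (poly p (c x)) + \<i> * of_real (poly q (c x)))) < e" if "x \<in> P" for x
    using cmod_le[of "\<phi> x - (of_real (poly p (c x)) + \<i> * of_real (poly q (c x)))"] p q that
    by fastforce
  then show ?thesis by blast
qed

lemma osc_uniformly_ensemble_reachable:
  assumes "compact P" and g: "continuous_on P g" "\<And>\<theta>. \<theta> \<in> P \<Longrightarrow> g \<theta> \<noteq> 0"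
    and inj: "inj_on (\<lambda>\<theta>. k * g \<theta> - \<theta>\<^sup>2) P"
  shows "uniformly_ensemble_reachable P (A_osc k g) (b_osc g)"
proof (rule uniformly_ensemble_reachableI, rule approx_reachable_uniform_limit)
  fix f :: "real \<Rightarrow> complex^2" and \<eta> :: real
  assume "continuous_on P f" "\<eta> > 0"
  let ?c = "\<lambda>\<theta>. k * g \<theta> - \<theta>\<^sup>2"
  let ?G = "\<lambda>\<theta>. complex_of_real (g \<theta>)"
  have "continuous_on P ?c" by (intro continuous_intros g)
  have "bounded (g ` P)" by (rule compact_imp_bounded[OF compact_continuous_image[OF g(1) assms(1)]])
  then obtain G where "G > 0" and G: "\<And>\<theta>. \<theta> \<in> P \<Longrightarrow> cmod (?G \<theta>) \<le> G"
    unfolding bounded_pos by auto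
  \<comment> \<open>Since \<open>g\<close> has no zeros, each component of \<open>f\<close> is \<open>g\<close> times a continuous function of \<open>\<theta>\<close>,
    which is approximated by polynomials in the injective function \<open>?c\<close>.\<close>
  have "continuous_on P (\<lambda>\<theta>. f \<theta> $ i / ?G \<theta>)" for i
    using \<open>continuous_on P f\<close> g by (intro continuous_intros) auto
  moreover have "\<eta> / (2 * G) > 0" using \<open>\<eta> > 0\<close> \<open>G > 0\<close> by simp
  ultimately have "\<exists>p q. \<forall>\<theta>\<in>P. cmod (f \<theta> $ i / ?G \<theta> -
      (of_real (poly p (?c \<theta>)) + \<i> * of_real (poly q (?c \<theta>)))) < \<eta> / (2 * G)" for i
    by (rule Stone_Weierstrass_complex_poly_comp[OF assms(1) \<open>continuous_on P ?c\<close> inj])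
  then obtain p1 q1 p2 q2 where
    "\<forall>\<theta>\<in>P. cmod (f \<theta> $ 1 / ?G \<theta> - (of_real (poly p1 (?c \<theta>)) + \<i> * of_real (poly q1 (?c \<theta>))))
      < \<eta> / (2 * G)" and
    "\<forall>\<theta>\<in>P. cmod (f \<theta> $ 2 / ?G \<theta> - (of_real (poly p2 (?c \<theta>)) + \<i> * of_real (poly q2 (?c \<theta>))))
      < \<eta> / (2 * G)"
    by meson
  note approx = this
  define F where "F = (\<lambda>\<theta>. vector
    [?G \<theta> * (of_real (poly p1 (?c \<theta>)) + \<i> * of_real (poly q1 (?c \<theta>))),
     ?G \<theta> * (of_real (poly p2 (?c \<theta>)) + \<i> * of_real (poly q2 (?c \<theta>)))] :: complex^2)"
  have "F = (\<lambda>\<theta>. (vector [?G \<theta> * 1 * of_real (poly p1 (?c \<theta>)), 0]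
      + vector [?G \<theta> * \<i> * of_real (poly q1 (?c \<theta>)), 0])
      + (vector [0, ?G \<theta> * 1 * of_real (poly p2 (?c \<theta>))]
      + vector [0, ?G \<theta> * \<i> * of_real (poly q2 (?c \<theta>))]))"
    unfolding F_def by (intro ext vector2_eqI) (simp_all add: distrib_left mult.assoc)
  then have "approx_reachable (A_osc k g) (b_osc g) P F"
    by (simp only:) (intro approx_reachable_add approx_reachable_osc_poly[OF assms(1) g(1)])
  moreover have "norm (F \<theta> - f \<theta>) \<le> \<eta>" if "\<theta> \<in> P" for \<theta>
  proof -
    have entry: "cmod (?G \<theta> * Q - f \<theta> $ i) \<le> \<eta> / 2"
      if "cmod (f \<theta> $ i / ?G \<theta> - Q) < \<eta> / (2 * G)" for Q i
    proof -
      have "?G \<theta> * Q - f \<theta> $ i = ?G \<theta> * (Q - f \<theta> $ i / ?G \<theta>)"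
        using g(2)[OF \<open>\<theta> \<in> P\<close>] by (simp add: right_diff_distrib)
      also have "cmod \<dots> \<le> G * (\<eta> / (2 * G))"
        unfolding norm_mult using G[OF \<open>\<theta> \<in> P\<close>] that
        by (intro mult_mono) (auto simp: norm_minus_commute less_imp_le)
      finally show ?thesis using \<open>G > 0\<close> by simp
    qed
    have "norm (F \<theta> - f \<theta>) \<le> cmod ((F \<theta> - f \<theta>) $ 1) + cmod ((F \<theta> - f \<theta>) $ 2)"
      using L2_set_le_sum[of "UNIV :: 2 set" "\<lambda>i. cmod ((F \<theta> - f \<theta>) $ i)"]
      by (simp add: norm_vec_def sum_2)
    also have "\<dots> \<le> \<eta> / 2 + \<eta> / 2"
      unfolding F_def vector_minus_component vector_2
      using approx \<open>\<theta> \<in> P\<close> by (intro add_mono entry) auto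
    finally show ?thesis by simp
  qed
  ultimately show "\<exists>F. approx_reachable (A_osc k g) (b_osc g) P F \<and> (\<forall>\<theta>\<in>P. norm (F \<theta> - f \<theta>) \<le> \<eta>)"
    by blast
qed

lemma inj_on_interval_if_deriv_nonzero:
  fixes f f' :: "real \<Rightarrow> real"
  assumes deriv: "\<And>x. x \<in> {a..b} \<Longrightarrow> (f has_real_derivative f' x) (at x within {a..b})"
    and nonzero: "\<And>x. x \<in> {a..b} \<Longrightarrow> f' x \<noteq> 0"
  shows "inj_on f {a..b}"
proof -
  have no_collision: False if "x \<in> {a..b}" "y \<in> {a..b}" "x < y" "f x = f y" for x y
  proof -
    have "continuous_on {a..b} f" by (rule DERIV_continuous_on[OF deriv])
    then have "continuous_on {x..y} f"
      by (rule continuous_on_subset) (use that in auto)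
    moreover have "(f has_real_derivative f' z) (at z)" if "x < z" "z < y" for z
      using deriv[of z] \<open>x \<in> {a..b}\<close> \<open>y \<in> {a..b}\<close> that by (simp add: at_within_Icc_at)
    ultimately obtain z where "x < z" "z < y" "(f has_real_derivative 0) (at z)"
      using Rolle[OF \<open>x < y\<close> \<open>f x = f y\<close>] real_differentiable_def by blast
    then have "f' z = 0"
      using \<open>\<And>z. x < z \<Longrightarrow> z < y \<Longrightarrow> (f has_real_derivative f' z) (at z)\<close> DERIV_unique by blast
    with nonzero[of z] \<open>x < z\<close> \<open>z < y\<close> that(1,2) show False by auto
  qed
  show ?thesis
  proof (rule inj_onI)
    fix x y assume "x \<in> {a..b}" "y \<in> {a..b}" "f x = f y"
    then show "x = y"
      using no_collision[of x y] no_collision[of y x] by (cases x y rule: linorder_cases) auto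
  qed
qed

lemma osc_coefficient_deriv_nonzero:
  fixes g' :: "real \<Rightarrow> real"
  assumes "compact P" "continuous_on P g'" "\<And>\<theta>. \<theta> \<in> P \<Longrightarrow> g' \<theta> \<noteq> 0"
    and "k > (SUP \<theta>\<in>P. 2 * \<theta> / g' \<theta>)" and "\<theta> \<in> P"
  shows "k * g' \<theta> - 2 * \<theta> \<noteq> 0"
proof
  assume "k * g' \<theta> - 2 * \<theta> = 0"
  then have "2 * \<theta> / g' \<theta> = k" using assms(3,5) by (simp add: field_simps)
  moreover have "continuous_on P (\<lambda>\<theta>. 2 * \<theta> / g' \<theta>)"
    using assms(2,3) by (intro continuous_intros) auto
  then have "bdd_above ((\<lambda>\<theta>. 2 * \<theta> / g' \<theta>) ` P)"
    by (intro bounded_imp_bdd_above compact_imp_bounded compact_continuous_image assms(1))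
  then have "2 * \<theta> / g' \<theta> \<le> (SUP \<theta>\<in>P. 2 * \<theta> / g' \<theta>)" by (rule cSUP_upper[OF assms(5)])
  ultimately show False using assms(4) by simp
qed

theorem mainTheorem4:
  fixes \<theta>s :: real and g g' :: "real \<Rightarrow> real" and k :: real
  assumes "\<theta>s > 0"
    and "\<And>\<theta>. \<theta> \<in> {-\<theta>s..\<theta>s} \<Longrightarrow> (g has_real_derivative g' \<theta>) (at \<theta> within {-\<theta>s..\<theta>s})"
    and "continuous_on {-\<theta>s..\<theta>s} g'"
    and "\<And>\<theta>. \<theta> \<in> {-\<theta>s..\<theta>s} \<Longrightarrow> g \<theta> \<noteq> 0"
    and "\<And>\<theta>. \<theta> \<in> {-\<theta>s..\<theta>s} \<Longrightarrow> g' \<theta> \<noteq> 0"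
    and "k > (SUP \<theta>\<in>{-\<theta>s..\<theta>s}. 2 * \<theta> / g' \<theta>)"
  shows "uniformly_ensemble_reachable {-\<theta>s..\<theta>s} (A_osc k g) (b_osc g)"
proof (rule osc_uniformly_ensemble_reachable)
  show "continuous_on {-\<theta>s..\<theta>s} g" using assms(2) by (rule DERIV_continuous_on)
  show "inj_on (\<lambda>\<theta>. k * g \<theta> - \<theta>\<^sup>2) {-\<theta>s..\<theta>s}"
  proof (rule inj_on_interval_if_deriv_nonzero)
    show "((\<lambda>\<theta>. k * g \<theta> - \<theta>\<^sup>2) has_real_derivative k * g' \<theta> - 2 * \<theta>) (at \<theta> within {-\<theta>s..\<theta>s})"
      if "\<theta> \<in> {-\<theta>s..\<theta>s}" for \<theta>
      using assms(2)[OF that] by (auto intro!: derivative_eq_intros)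
    show "k * g' \<theta> - 2 * \<theta> \<noteq> 0" if "\<theta> \<in> {-\<theta>s..\<theta>s}" for \<theta>
      using osc_coefficient_deriv_nonzero[of "{-\<theta>s..\<theta>s}" g' k \<theta>] assms(3,5,6) that by simp
  qed
qed (use assms(4) in auto)

end
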